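(* Let $x(t)\in\mathbb{R}^{n_x}$, $t\in[0,T]$, solve $dx(t)=f(t,x(t),u(t))\,dt+G(t,x(t),u(t))\,dw(t)$, and let $g_1,\dots,g_m:\mathbb{R}^{n_x}\to\mathbb{R}$ be twice continuously differentiable, with gradients $a_j$ and Hessians $H_j$. Suppose the Control-Independence Assumption and the Paired-Lipschitz Assumption hold for each $g_j$, and assume: (1) $f_t$ is pathwise bounded on $[0,T]$ almost surely and $\mathbb{E}\int_0^T\|f_t\|^2dt<\infty$; (2) $\mathbb{E}\|G_t\|^2$ is bounded over $t\in[0,T]$ and $\mathbb{E}\int_0^T\|G_t\|^2dt<\infty$. Let $y(t)\triangleq(g_1(x(t)),\dots,g_m(x(t)))$. Let $\mathcal{P}_n=\{0=t_0<t_1<\dots<t_{k_n}=T\}$ be a sequence of partitions of $[0,T]$ with mesh $\delta_n\to0$ and $k_n\delta_n\le cT$ for a fixed $c>0$, and let $\hat y^n$ be the piecewise constant-coefficient approximation of $y$ associated with $\mathcal{P}_n$. Then there exists a sequence $\epsilon_n\to0$ such that $\hat y^n$ converges $\epsilon_n$-pathwise-uniformly to $y$.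
   Context: Setting: $(\Omega,\mathcal{F},P)$ with a filtration, $w(t)$ a standard multidimensional Brownian motion, $u(t)$ a progressively measurable control process; $f_t\triangleq f(t,x(t),u(t))$, $G_t\triangleq G(t,x(t),u(t))$. Control-Independence Assumption (for $g_j$): either (a) $u(t)=\kappa(t,x(t))$ with $\kappa$ deterministic and Lipschitz, or (b) $a_j(x)^\top f(t,x,u)$ and $a_j(x)^\top G(t,x,u)$ do not depend on $u$. Paired-Lipschitz Assumption (for $g_j$ and $G$): either (i) $G$ is constant and $a_j$ is Lipschitz, or (ii) $a_j$ is constant and $G$ is Lipschitz, or (iii) both $a_j$ and $G$ are bounded and Lipschitz. Piecewise approximation: for $s\in[0,T]$ let $t=\max\{t_i\in\mathcal{P}_n: t_i\le s\}$, and set $\hat y^n(s)\triangleq y(t)+(s-t)\,h_t+\Sigma_t\,(w(s)-w(t))$, where $h_{t,j}\triangleq a_j(x(t))^\top f_t+\frac12\mathrm{tr}\big(G_t^\top H_j(x(t))G_t\big)$ and $\Sigma_t$ is the matrix whose $j$-th row is $a_j(x(t))^\top G_t$. Pathwise-uniform convergence: $z^n$ converges $\epsilon_n$-pathwise-uniformly to $z$ if there is a random variable $M_\omega$ with $0<M_\omega<\infty$ a.s. (not depending on $n$) such that $P\big(\sup_{s\in[0,T]}\|z^n(s)-z(s)\|>\epsilon_nM_\omega\big)\to0$. *)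

theory Defs
  imports "HOL-Probability.Probability"
begin

definition is_filtration :: "'a measure \<Rightarrow> (real \<Rightarrow> 'a measure) \<Rightarrow> bool" where
  "is_filtration M F \<longleftrightarrow>
     (\<forall>t. space (F t) = space M \<and> sets (F t) \<subseteq> sets M) \<and>
     (\<forall>s t. s \<le> t \<longrightarrow> sets (F s) \<subseteq> sets (F t))"

definition progressive ::
  "(real \<Rightarrow> 'a measure) \<Rightarrow> real \<Rightarrow> (real \<Rightarrow> 'a \<Rightarrow> 'b::topological_space) \<Rightarrow> bool" where
  "progressive F T X \<longleftrightarrow>
     (\<forall>t\<in>{0..T}. (\<lambda>(s, \<omega>). X s \<omega>) \<in> borel_measurable (restrict_space borel {0..t} \<Otimes>\<^sub>M F t))"

definition std_brownian_motion ::
  "'a measure \<Rightarrow> (real \<Rightarrow> 'a measure) \<Rightarrow> (real \<Rightarrow> 'a \<Rightarrow> real ^ 'd) \<Rightarrow> bool" where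
  "std_brownian_motion M F w \<longleftrightarrow>
     (\<forall>t\<ge>0. w t \<in> borel_measurable (F t)) \<and>
     (\<forall>\<omega>\<in>space M. w 0 \<omega> = 0) \<and>
     (AE \<omega> in M. continuous_on {0..} (\<lambda>t. w t \<omega>)) \<and>
     (\<forall>s t. 0 \<le> s \<longrightarrow> s < t \<longrightarrow>
        (\<forall>i. distributed M lborel (\<lambda>\<omega>. (w t \<omega> - w s \<omega>) $ i) (normal_density 0 (sqrt (t - s)))) \<and>
        prob_space.indep_vars M (\<lambda>_. borel) (\<lambda>i \<omega>. (w t \<omega> - w s \<omega>) $ i) UNIV \<and>
        (\<forall>A\<in>sets (F s). \<forall>B\<in>sets borel.
           measure M (A \<inter> {\<omega>\<in>space M. w t \<omega> - w s \<omega> \<in> B})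
             = measure M A * measure M {\<omega>\<in>space M. w t \<omega> - w s \<omega> \<in> B}))"

definition valid_simple ::
  "'a measure \<Rightarrow> (real \<Rightarrow> 'a measure) \<Rightarrow> real \<Rightarrow> nat \<Rightarrow> (nat \<Rightarrow> real)
     \<Rightarrow> (nat \<Rightarrow> 'a \<Rightarrow> real ^ 'd ^ 'n) \<Rightarrow> bool" where
  "valid_simple M F T k s \<xi> \<longleftrightarrow>
     s 0 = 0 \<and> s k = T \<and> (\<forall>i<k. s i < s (Suc i)) \<and>
     (\<forall>i<k. \<xi> i \<in> borel_measurable (F (s i)) \<and> bounded (\<xi> i ` space M))"

definition simple_proc ::
  "nat \<Rightarrow> (nat \<Rightarrow> real) \<Rightarrow> (nat \<Rightarrow> 'a \<Rightarrow> real ^ 'd ^ 'n) \<Rightarrow> real \<Rightarrow> 'a \<Rightarrow> real ^ 'd ^ 'n" where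
  "simple_proc k s \<xi> t \<omega> = (\<Sum>i<k. if s i \<le> t \<and> t < s (Suc i) then \<xi> i \<omega> else 0)"

definition simple_int ::
  "(real \<Rightarrow> 'a \<Rightarrow> real ^ 'd) \<Rightarrow> nat \<Rightarrow> (nat \<Rightarrow> real) \<Rightarrow> (nat \<Rightarrow> 'a \<Rightarrow> real ^ 'd ^ 'n)
     \<Rightarrow> real \<Rightarrow> 'a \<Rightarrow> real ^ 'n" where
  "simple_int w k s \<xi> t \<omega> =
     (\<Sum>i<k. \<xi> i \<omega> *v (w (min (s (Suc i)) t) \<omega> - w (min (s i) t) \<omega>))"

text \<open>I t = \<integral>_0^t G dw for t in [0,T]: there are simple processes converging to G in
  L2(\<Omega> \<times> [0,T]) whose integrals converge to I t in L2(\<Omega>) for each t.\<close>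
definition ito_integral ::
  "'a measure \<Rightarrow> (real \<Rightarrow> 'a measure) \<Rightarrow> (real \<Rightarrow> 'a \<Rightarrow> real ^ 'd) \<Rightarrow> real
     \<Rightarrow> (real \<Rightarrow> 'a \<Rightarrow> real ^ 'd ^ 'n) \<Rightarrow> (real \<Rightarrow> 'a \<Rightarrow> real ^ 'n) \<Rightarrow> bool" where
  "ito_integral M F w T G I \<longleftrightarrow>
     progressive F T G \<and>
     (\<forall>t\<in>{0..T}. I t \<in> borel_measurable M) \<and>
     (\<exists>K S \<Xi>. (\<forall>k. valid_simple M F T (K k) (S k) (\<Xi> k)) \<and>
        ((\<lambda>k. \<integral>\<^sup>+\<omega>. (\<integral>\<^sup>+t\<in>{0..T}.
              ennreal ((norm (simple_proc (K k) (S k) (\<Xi> k) t \<omega> - G t \<omega>))\<^sup>2) \<partial>lborel) \<partial>M)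
           \<longlonglongrightarrow> 0) \<and>
        (\<forall>t\<in>{0..T}. (\<lambda>k. \<integral>\<^sup>+\<omega>. ennreal ((norm (I t \<omega> - simple_int w (K k) (S k) (\<Xi> k) t \<omega>))\<^sup>2) \<partial>M)
           \<longlonglongrightarrow> 0))"

definition sde_solution ::
  "'a measure \<Rightarrow> (real \<Rightarrow> 'a measure) \<Rightarrow> (real \<Rightarrow> 'a \<Rightarrow> real ^ 'd) \<Rightarrow> real
     \<Rightarrow> (real \<Rightarrow> real ^ 'n \<Rightarrow> 'u \<Rightarrow> real ^ 'n) \<Rightarrow> (real \<Rightarrow> real ^ 'n \<Rightarrow> 'u \<Rightarrow> real ^ 'd ^ 'n)
     \<Rightarrow> (real \<Rightarrow> 'a \<Rightarrow> 'u) \<Rightarrow> (real \<Rightarrow> 'a \<Rightarrow> real ^ 'n) \<Rightarrow> bool" where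
  "sde_solution M F w T f G u x \<longleftrightarrow>
     (\<forall>t\<in>{0..T}. x t \<in> borel_measurable (F t)) \<and>
     (AE \<omega> in M. continuous_on {0..T} (\<lambda>t. x t \<omega>)) \<and>
     progressive F T (\<lambda>t \<omega>. f t (x t \<omega>) (u t \<omega>)) \<and>
     (AE \<omega> in M. set_integrable lborel {0..T} (\<lambda>s. f s (x s \<omega>) (u s \<omega>))) \<and>
     (\<exists>I. ito_integral M F w T (\<lambda>t \<omega>. G t (x t \<omega>) (u t \<omega>)) I \<and>
        (\<forall>t\<in>{0..T}. AE \<omega> in M.
           x t \<omega> = x 0 \<omega> + (LINT s:{0..t}|lborel. f s (x s \<omega>) (u s \<omega>)) + I t \<omega>))"

definition is_partition :: "real \<Rightarrow> nat \<Rightarrow> (nat \<Rightarrow> real) \<Rightarrow> bool" where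
  "is_partition T k tp \<longleftrightarrow> tp 0 = 0 \<and> tp k = T \<and> (\<forall>i<k. tp i < tp (Suc i))"

definition mesh :: "nat \<Rightarrow> (nat \<Rightarrow> real) \<Rightarrow> real" where
  "mesh k tp = Max ((\<lambda>i. tp (Suc i) - tp i) ` {..<k})"

definition grid_pt :: "nat \<Rightarrow> (nat \<Rightarrow> real) \<Rightarrow> real \<Rightarrow> real" where
  "grid_pt k tp s = tp (GREATEST i. i \<le> k \<and> tp i \<le> s)"

definition yhat ::
  "('m \<Rightarrow> real ^ 'n \<Rightarrow> real) \<Rightarrow> ('m \<Rightarrow> real ^ 'n \<Rightarrow> real ^ 'n) \<Rightarrow> ('m \<Rightarrow> real ^ 'n \<Rightarrow> real ^ 'n ^ 'n)
   \<Rightarrow> (real \<Rightarrow> real ^ 'n \<Rightarrow> 'u \<Rightarrow> real ^ 'n) \<Rightarrow> (real \<Rightarrow> real ^ 'n \<Rightarrow> 'u \<Rightarrow> real ^ 'd ^ 'n)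
   \<Rightarrow> (real \<Rightarrow> 'a \<Rightarrow> real ^ 'n) \<Rightarrow> (real \<Rightarrow> 'a \<Rightarrow> 'u) \<Rightarrow> (real \<Rightarrow> 'a \<Rightarrow> real ^ 'd)
   \<Rightarrow> nat \<Rightarrow> (nat \<Rightarrow> real) \<Rightarrow> real \<Rightarrow> 'a \<Rightarrow> real ^ 'm" where
  "yhat g a H f G x u w k tp s \<omega> =
     (let t = grid_pt k tp s;
          xt = x t \<omega>; ft = f t xt (u t \<omega>); Gt = G t xt (u t \<omega>);
          y = (\<chi> j. g j xt);
          h = (\<chi> j. a j xt \<bullet> ft + 1/2 * trace (transpose Gt ** H j xt ** Gt));
          \<Sigma> = (\<chi> j. a j xt v* Gt)
      in y + (s - t) *\<^sub>R h + \<Sigma> *v (w s \<omega> - w t \<omega>))"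

text \<open>z^n converges \<epsilon>_n-pathwise-uniformly to z on [0,T]. The probability of the
  (possibly non-measurable) event is taken as outer probability.\<close>
definition pathwise_uniform_conv ::
  "'a measure \<Rightarrow> real \<Rightarrow> (nat \<Rightarrow> real) \<Rightarrow> (nat \<Rightarrow> real \<Rightarrow> 'a \<Rightarrow> 'b::real_normed_vector)
     \<Rightarrow> (real \<Rightarrow> 'a \<Rightarrow> 'b) \<Rightarrow> bool" where
  "pathwise_uniform_conv M T \<epsilon> zn z \<longleftrightarrow>
     (\<exists>Mw::'a \<Rightarrow> real. Mw \<in> borel_measurable M \<and> (AE \<omega> in M. 0 < Mw \<omega>) \<and>
        (\<exists>E. (\<forall>n. E n \<in> sets M) \<and>
           (\<forall>n. {\<omega>\<in>space M. \<exists>s\<in>{0..T}. norm (zn n s \<omega> - z s \<omega>) > \<epsilon> n * Mw \<omega>} \<subseteq> E n) \<and>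
           (\<lambda>n. measure M (E n)) \<longlonglongrightarrow> 0))"

end

theory Submission
  imports Defs
begin

text \<open>Along almost every sample path, x and w are continuous and f is bounded on [0,T].
  The two structural assumptions then keep h and Sigma bounded along the path: either G is
  bounded along the path, or the gradient a_j is constant, so that its Hessian vanishes and
  either u is a continuous function of (t, x) or a_j' G does not see the control at all.
  Since yhat(s) - y(s) = (y(t) - y(s)) + (s - t) h_t + Sigma_t (w(s) - w(t)), uniform continuity
  of y and w gives uniform convergence on [0,T] along almost every path.  On each partition cell
  the error is continuous, so its supremum is already attained along the countably many rational
  times and is a random variable; almost sure convergence gives convergence in probability, and
  a diagonal choice of thresholds eps_n tending to 0 yields the claim with M_omega = 1.\<close>

lemma continuous_on_matrix_matrix_mult [continuous_intros]:
  fixes f :: "'x::topological_space \<Rightarrow> real^'k^'m" and g :: "'x \<Rightarrow> real^'n^'k"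
  assumes "continuous_on S f" "continuous_on S g"
  shows "continuous_on S (\<lambda>x. f x ** g x)"
  unfolding matrix_matrix_mult_def by (intro continuous_intros assms)

lemma continuous_on_transpose [continuous_intros]:
  fixes f :: "'x::topological_space \<Rightarrow> real^'k^'m"
  assumes "continuous_on S f"
  shows "continuous_on S (\<lambda>x. transpose (f x))"
  unfolding transpose_def by (intro continuous_intros assms)

lemma continuous_on_trace [continuous_intros]:
  fixes f :: "'x::topological_space \<Rightarrow> real^'m^'m"
  assumes "continuous_on S f"
  shows "continuous_on S (\<lambda>x. trace (f x))"
  unfolding trace_def by (intro continuous_intros assms)

lemma continuous_on_vector_matrix_mult [continuous_intros]:
  fixes f :: "'x::topological_space \<Rightarrow> real^'m" and g :: "'x \<Rightarrow> real^'n^'m"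
  assumes "continuous_on S f" "continuous_on S g"
  shows "continuous_on S (\<lambda>x. f x v* g x)"
  unfolding vector_matrix_mult_def by (intro continuous_intros assms)

lemma continuous_on_matrix_vector_mult [continuous_intros]:
  fixes f :: "'x::topological_space \<Rightarrow> real^'n^'m" and g :: "'x \<Rightarrow> real^'n"
  assumes "continuous_on S f" "continuous_on S g"
  shows "continuous_on S (\<lambda>x. f x *v g x)"
  unfolding matrix_vector_mult_def by (intro continuous_intros assms)

lemma borel_measurable_filtration:
  assumes "is_filtration M F" "X \<in> borel_measurable (F t)"
  shows "X \<in> borel_measurable M"
proof -
  have "subalgebra M (F t)"
    using assms(1) unfolding is_filtration_def subalgebra_def by auto
  then show ?thesis using measurable_from_subalg assms(2) by blast
qed

lemma progressive_borel_measurable: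
  assumes "is_filtration M F" "progressive F T X" "t \<in> {0..T}"
  shows "X t \<in> borel_measurable M"
proof -
  have slice: "Pair t \<in> measurable (F T) (restrict_space borel {0..T} \<Otimes>\<^sub>M F T)"
    by (rule measurable_Pair1') (use assms(3) in auto)
  have "(\<lambda>(s, \<omega>). X s \<omega>) \<in> borel_measurable (restrict_space borel {0..T} \<Otimes>\<^sub>M F T)"
    using assms(2,3) unfolding progressive_def by auto
  from measurable_comp[OF slice this] have "X t \<in> borel_measurable (F T)"
    by (simp add: comp_def)
  then show ?thesis by (rule borel_measurable_filtration[OF assms(1)])
qed

lemma is_partition_mono:
  assumes "is_partition T k tp" "i \<le> j" "j \<le> k"
  shows "tp i \<le> tp j"
  using assms(2,3)
proof (induction j)
  case (Suc j)
  show ?case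
  proof (cases "i = Suc j")
    case False
    then have "tp i \<le> tp j" using Suc by simp
    also have "tp j < tp (Suc j)" using assms(1) Suc(3) unfolding is_partition_def by auto
    finally show ?thesis by simp
  qed simp
qed simp

lemma grid_pt_cell:
  assumes "is_partition T k tp" "0 \<le> s"
  obtains i where "i \<le> k" "grid_pt k tp s = tp i" "tp i \<le> s" "i < k \<Longrightarrow> s < tp (Suc i)"
proof -
  let ?P = "\<lambda>i. i \<le> k \<and> tp i \<le> s"
  define i where "i = (GREATEST i. ?P i)"
  have "?P 0" using assms unfolding is_partition_def by simp
  then have Pi: "?P i" unfolding i_def by (rule GreatestI_nat[where P="?P" and b=k]) simp
  have "s < tp (Suc i)" if "i < k"
  proof (rule ccontr)
    assume "\<not> s < tp (Suc i)"
    with that have "Suc i \<le> i"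
      unfolding i_def by (intro Greatest_le_nat[where P="?P" and b=k]) auto
    then show False by simp
  qed
  with Pi show thesis using that[of i] unfolding grid_pt_def i_def by auto
qed

lemma grid_pt_eqI:
  assumes "is_partition T k tp" "i < k" "tp i \<le> s" "s < tp (Suc i)"
  shows "grid_pt k tp s = tp i"
proof -
  have "(GREATEST j. j \<le> k \<and> tp j \<le> s) = i"
  proof (rule Greatest_equality)
    fix j assume j: "j \<le> k \<and> tp j \<le> s"
    show "j \<le> i"
    proof (rule ccontr)
      assume "\<not> j \<le> i"
      then have "tp (Suc i) \<le> tp j" using is_partition_mono[OF assms(1), of "Suc i" j] j by simp
      then show False using j assms(4) by simp
    qed
  qed (use assms in simp)
  then show ?thesis unfolding grid_pt_def by simp
qed

lemma gap_le_mesh: "i < k \<Longrightarrow> tp (Suc i) - tp i \<le> mesh k tp"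
  unfolding mesh_def by (intro Max_ge) auto

lemma grid_pt_bounds:
  assumes "is_partition T k tp" "0 < T" "s \<in> {0..T}"
  shows "grid_pt k tp s \<in> {0..s}" "s - grid_pt k tp s \<le> mesh k tp"
proof -
  obtain i where i: "i \<le> k" "grid_pt k tp s = tp i" "tp i \<le> s" "i < k \<Longrightarrow> s < tp (Suc i)"
    using grid_pt_cell[OF assms(1)] assms(3) by auto
  have "tp 0 \<le> tp i" using is_partition_mono[OF assms(1)] i by simp
  then show "grid_pt k tp s \<in> {0..s}" using assms(1) i unfolding is_partition_def by simp
  have k0: "0 < k" using assms(1,2) unfolding is_partition_def by (cases k) auto
  have "0 < tp (Suc 0) - tp 0" using assms(1) k0 unfolding is_partition_def by auto
  then have mesh_pos: "0 \<le> mesh k tp" using gap_le_mesh[OF k0, of tp] by simp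
  show "s - grid_pt k tp s \<le> mesh k tp"
  proof (cases "i < k")
    case True
    then show ?thesis using i gap_le_mesh[OF True, of tp] by simp
  next
    case False
    then have "tp i = T" using i assms(1) unfolding is_partition_def by (simp add: le_antisym)
    then show ?thesis using i(2) assms(3) mesh_pos by auto
  qed
qed

definition y_of :: "('m \<Rightarrow> real ^ 'n \<Rightarrow> real) \<Rightarrow> (real \<Rightarrow> 'a \<Rightarrow> real ^ 'n) \<Rightarrow> real \<Rightarrow> 'a \<Rightarrow> real ^ 'm"
  where "y_of g x t \<omega> = (\<chi> j. g j (x t \<omega>))"

definition h_coeff :: "('m \<Rightarrow> real ^ 'n \<Rightarrow> real ^ 'n) \<Rightarrow> ('m \<Rightarrow> real ^ 'n \<Rightarrow> real ^ 'n ^ 'n)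
    \<Rightarrow> (real \<Rightarrow> real ^ 'n \<Rightarrow> 'u \<Rightarrow> real ^ 'n) \<Rightarrow> (real \<Rightarrow> real ^ 'n \<Rightarrow> 'u \<Rightarrow> real ^ 'd ^ 'n)
    \<Rightarrow> (real \<Rightarrow> 'a \<Rightarrow> real ^ 'n) \<Rightarrow> (real \<Rightarrow> 'a \<Rightarrow> 'u) \<Rightarrow> real \<Rightarrow> 'a \<Rightarrow> real ^ 'm"
  where "h_coeff a H f G x u t \<omega> = (\<chi> j. a j (x t \<omega>) \<bullet> f t (x t \<omega>) (u t \<omega>) + 1/2 *
      trace (transpose (G t (x t \<omega>) (u t \<omega>)) ** H j (x t \<omega>) ** G t (x t \<omega>) (u t \<omega>)))"

definition Sigma_coeff :: "('m \<Rightarrow> real ^ 'n \<Rightarrow> real ^ 'n) \<Rightarrow> (real \<Rightarrow> real ^ 'n \<Rightarrow> 'u \<Rightarrow> real ^ 'd ^ 'n)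
    \<Rightarrow> (real \<Rightarrow> 'a \<Rightarrow> real ^ 'n) \<Rightarrow> (real \<Rightarrow> 'a \<Rightarrow> 'u) \<Rightarrow> real \<Rightarrow> 'a \<Rightarrow> real ^ 'd ^ 'm"
  where "Sigma_coeff a G x u t \<omega> = (\<chi> j. a j (x t \<omega>) v* G t (x t \<omega>) (u t \<omega>))"

lemma yhat_eq_coeffs:
  assumes "grid_pt k tp s = t"
  shows "yhat g a H f G x u w k tp s \<omega> =
    y_of g x t \<omega> + (s - t) *\<^sub>R h_coeff a H f G x u t \<omega> + Sigma_coeff a G x u t \<omega> *v (w s \<omega> - w t \<omega>)"
  using assms unfolding yhat_def y_of_def h_coeff_def Sigma_coeff_def Let_def by simp

lemma yhat_error_measurable:
  fixes g :: "'m::finite \<Rightarrow> real ^ 'n \<Rightarrow> real" and x :: "real \<Rightarrow> 'a \<Rightarrow> real ^ 'n"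
    and w :: "real \<Rightarrow> 'a \<Rightarrow> real ^ 'd" and f :: "real \<Rightarrow> real ^ 'n \<Rightarrow> 'u \<Rightarrow> real ^ 'n"
    and G :: "real \<Rightarrow> real ^ 'n \<Rightarrow> 'u \<Rightarrow> real ^ 'd ^ 'n"
  assumes filt: "is_filtration M F" and bm: "std_brownian_motion M F w"
    and sde: "sde_solution M F w T f G u x"
    and part: "is_partition T k tp" and "0 < T" and s: "s \<in> {0..T}"
    and cg: "\<And>j. continuous_on UNIV (g j)" and ca: "\<And>j. continuous_on UNIV (a j)"
    and cH: "\<And>j. continuous_on UNIV (H j)"
  shows "(\<lambda>\<omega>. norm (yhat g a H f G x u w k tp s \<omega> - y_of g x s \<omega>)) \<in> borel_measurable M"
proof -
  define t where "t = grid_pt k tp s"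
  have t: "t \<in> {0..T}" using grid_pt_bounds(1)[OF part \<open>0 < T\<close> s] s unfolding t_def by auto
  have x: "x r \<in> borel_measurable M" if "r \<in> {0..T}" for r
    using sde borel_measurable_filtration[OF filt] that unfolding sde_solution_def by blast
  have w: "w r \<in> borel_measurable M" if "0 \<le> r" for r
    using bm borel_measurable_filtration[OF filt] that unfolding std_brownian_motion_def by blast
  have "progressive F T (\<lambda>t \<omega>. f t (x t \<omega>) (u t \<omega>))" "progressive F T (\<lambda>t \<omega>. G t (x t \<omega>) (u t \<omega>))"
    using sde unfolding sde_solution_def ito_integral_def by blast+
  from this[THEN progressive_borel_measurable[OF filt _ t]]
  have components: "(\<lambda>\<omega>. (x t \<omega>, f t (x t \<omega>) (u t \<omega>), G t (x t \<omega>) (u t \<omega>), w s \<omega>, w t \<omega>, x s \<omega>)) \<in> borel_measurable M"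
    using x[OF t] x[OF s] w[of s] w[of t] s t by (auto intro!: measurable_Pair)
  define \<Phi> where "\<Phi> = (\<lambda>(xt::real^'n, ft::real^'n, Gt::real^'d^'n, ws::real^'d, wt::real^'d, xs::real^'n).
     norm ((\<chi> j. g j xt) + (s - t) *\<^sub>R (\<chi> j. a j xt \<bullet> ft + 1/2 * trace (transpose Gt ** H j xt ** Gt))
       + (\<chi> j. a j xt v* Gt) *v (ws - wt) - (\<chi> j. g j xs)))"
  have "continuous_on UNIV \<Phi>"
    unfolding \<Phi>_def case_prod_beta
    by (intro continuous_intros continuous_on_compose2[OF cg] continuous_on_compose2[OF ca]
        continuous_on_compose2[OF cH]) auto
  from borel_measurable_continuous_on[OF this components] show ?thesis
    unfolding yhat_eq_coeffs[OF t_def[symmetric]] \<Phi>_def y_of_def h_coeff_def Sigma_coeff_def by simp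
qed

text \<open>The Control-Independence Assumption, alternatives (a) and (b), for one gradient a = a_j,
  along one sample path (X, U) of (x, u).\<close>

definition control_independent ::
  "real \<Rightarrow> (real \<Rightarrow> real ^ 'n) \<Rightarrow> (real \<Rightarrow> 'u::metric_space) \<Rightarrow> (real \<Rightarrow> real ^ 'n \<Rightarrow> 'u \<Rightarrow> real ^ 'n)
    \<Rightarrow> (real \<Rightarrow> real ^ 'n \<Rightarrow> 'u \<Rightarrow> real ^ 'd ^ 'n) \<Rightarrow> (real ^ 'n \<Rightarrow> real ^ 'n) \<Rightarrow> bool"
  where "control_independent T X U f G a \<longleftrightarrow>
    (\<exists>\<kappa> L. L-lipschitz_on UNIV (\<lambda>(t, z). \<kappa> t z) \<and> (\<forall>t\<in>{0..T}. U t = \<kappa> t (X t)))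
    \<or> (\<forall>t z v v'. a z \<bullet> f t z v = a z \<bullet> f t z v' \<and> a z v* G t z v = a z v* G t z v')"

definition paired_lipschitz ::
  "(real \<Rightarrow> real ^ 'n \<Rightarrow> 'u::metric_space \<Rightarrow> real ^ 'd ^ 'n) \<Rightarrow> (real ^ 'n \<Rightarrow> real ^ 'n) \<Rightarrow> bool"
  where "paired_lipschitz G a \<longleftrightarrow>
    ((\<exists>G0. \<forall>t z v. G t z v = G0) \<and> (\<exists>L. L-lipschitz_on UNIV a))
    \<or> ((\<exists>a0. \<forall>z. a z = a0) \<and> (\<exists>L. L-lipschitz_on UNIV (\<lambda>(t, z, v). G t z v)))
    \<or> (bounded (range a) \<and> (\<exists>L. L-lipschitz_on UNIV a) \<and>
       bounded (range (\<lambda>(t, z, v). G t z v)) \<and> (\<exists>L. L-lipschitz_on UNIV (\<lambda>(t, z, v). G t z v)))"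

lemma row_coeffs_bounded_if_G_bounded:
  fixes X fp :: "real \<Rightarrow> real ^ 'n" and Gp :: "real \<Rightarrow> real ^ 'd ^ 'n"
    and a :: "real ^ 'n \<Rightarrow> real ^ 'n" and H :: "real ^ 'n \<Rightarrow> real ^ 'n ^ 'n"
  assumes X: "continuous_on {0..T} X" and ca: "continuous_on UNIV a" and cH: "continuous_on UNIV H"
    and fp: "\<forall>t\<in>{0..T}. norm (fp t) \<le> Bf" and Gp: "\<forall>t\<in>{0..T}. norm (Gp t) \<le> R"
  shows "\<exists>C. \<forall>t\<in>{0..T}. \<bar>a (X t) \<bullet> fp t + 1/2 * trace (transpose (Gp t) ** H (X t) ** Gp t)\<bar> \<le> C
      \<and> norm (a (X t) v* Gp t) \<le> C"
proof -
  define K :: "((real ^ 'n) \<times> (real ^ 'n) \<times> (real ^ 'd ^ 'n)) set"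
    where "K = X ` {0..T} \<times> cball 0 Bf \<times> cball 0 R"
  define \<phi> where "\<phi> = (\<lambda>(z, v, A :: real ^ 'd ^ 'n). (a z \<bullet> v + 1/2 * trace (transpose A ** H z ** A), a z v* A))"
  have "compact K" unfolding K_def using X by (intro compact_Times compact_continuous_image compact_cball) auto
  moreover have "continuous_on K \<phi>"
  proof -
    have "continuous_on K (\<lambda>p. a (fst p))" "continuous_on K (\<lambda>p. H (fst p))"
      by (rule continuous_on_compose2[OF ca], intro continuous_intros, simp,
          rule continuous_on_compose2[OF cH], intro continuous_intros, simp)
    then show ?thesis unfolding \<phi>_def case_prod_beta by (intro continuous_intros)
  qed
  ultimately have "bounded (\<phi> ` K)" by (intro compact_imp_bounded compact_continuous_image)
  then obtain C where C: "\<And>p. p \<in> K \<Longrightarrow> norm (\<phi> p) \<le> C" unfolding bounded_iff by blast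
  show ?thesis
  proof (intro exI ballI)
    fix t assume "t \<in> {0..T}"
    then have "(X t, fp t, Gp t) \<in> K" using fp Gp unfolding K_def by auto
    then have "norm (a (X t) \<bullet> fp t + 1/2 * trace (transpose (Gp t) ** H (X t) ** Gp t), a (X t) v* Gp t) \<le> C"
      using C unfolding \<phi>_def by fastforce
    from order_trans[OF norm_fst_le this] order_trans[OF norm_snd_le this]
    show "\<bar>a (X t) \<bullet> fp t + 1/2 * trace (transpose (Gp t) ** H (X t) ** Gp t)\<bar> \<le> C
        \<and> norm (a (X t) v* Gp t) \<le> C" by simp
  qed
qed

lemma row_coeffs_bounded_along_path:
  fixes X :: "real \<Rightarrow> real ^ 'n" and U :: "real \<Rightarrow> 'u::metric_space"
    and f :: "real \<Rightarrow> real ^ 'n \<Rightarrow> 'u \<Rightarrow> real ^ 'n" and G :: "real \<Rightarrow> real ^ 'n \<Rightarrow> 'u \<Rightarrow> real ^ 'd ^ 'n"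
    and a :: "real ^ 'n \<Rightarrow> real ^ 'n" and H :: "real ^ 'n \<Rightarrow> real ^ 'n ^ 'n"
  assumes X: "continuous_on {0..T} X" and f: "\<forall>t\<in>{0..T}. norm (f t (X t) (U t)) \<le> Bf"
    and ca: "continuous_on UNIV a" and cH: "continuous_on UNIV H"
    and hess: "\<And>z. (a has_derivative (\<lambda>h. H z *v h)) (at z)"
    and ci: "control_independent T X U f G a" and pl: "paired_lipschitz G a"
  shows "\<exists>C. \<forall>t\<in>{0..T}.
      \<bar>a (X t) \<bullet> f t (X t) (U t) + 1/2 * trace (transpose (G t (X t) (U t)) ** H (X t) ** G t (X t) (U t))\<bar> \<le> C
      \<and> norm (a (X t) v* G t (X t) (U t)) \<le> C"
proof (cases "\<exists>R. \<forall>t\<in>{0..T}. norm (G t (X t) (U t)) \<le> R")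
  case True
  then obtain R where "\<forall>t\<in>{0..T}. norm (G t (X t) (U t)) \<le> R" by blast
  then show ?thesis by (rule row_coeffs_bounded_if_G_bounded[OF X ca cH f])
next
  case unbounded: False
  \<comment> \<open>Only alternative (ii) of the Paired-Lipschitz Assumption allows this.\<close>
  have "\<not> (\<exists>G0. \<forall>t z v. G t z v = G0)"
    using unbounded by (metis order.refl)
  moreover have "\<not> bounded (range (\<lambda>(t, z, v). G t z v))"
    using unbounded unfolding bounded_iff by (metis (no_types, lifting) case_prod_conv rangeI)
  ultimately obtain a0 L where a0: "\<And>z. a z = a0" and L: "L-lipschitz_on UNIV (\<lambda>(t, z, v). G t z v)"
    using pl unfolding paired_lipschitz_def by blast
  have cG: "continuous_on UNIV (\<lambda>(t, z, v). G t z v)" using L by (rule lipschitz_on_continuous_on)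
  have bounded_path: "\<exists>R. \<forall>t\<in>{0..T}. norm (\<gamma> t) \<le> R" if "continuous_on {0..T} \<gamma>"
    for \<gamma> :: "real \<Rightarrow> 'v::real_normed_vector"
    using compact_imp_bounded[OF compact_continuous_image[OF that compact_Icc]]
    unfolding bounded_iff by blast
  from ci consider (feedback) \<kappa> L' where "L'-lipschitz_on UNIV (\<lambda>(t, z). \<kappa> t z)" "\<forall>t\<in>{0..T}. U t = \<kappa> t (X t)"
    | (blind) "\<forall>t z v v'. a z \<bullet> f t z v = a z \<bullet> f t z v' \<and> a z v* G t z v = a z v* G t z v'"
    unfolding control_independent_def by blast
  then show ?thesis
  proof cases
    case feedback
    then have "continuous_on UNIV (\<lambda>(t, z). \<kappa> t z)" by (blast intro: lipschitz_on_continuous_on)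
    from continuous_on_compose2[OF this, of "{0..T}" "\<lambda>t. (t, X t)"]
    have "continuous_on {0..T} (\<lambda>t. \<kappa> t (X t))" by (simp add: continuous_on_Pair X)
    then have "continuous_on {0..T} (\<lambda>t. (t, X t, \<kappa> t (X t)))" by (intro continuous_intros X)
    from continuous_on_compose2[OF cG this]
    have "continuous_on {0..T} (\<lambda>t. G t (X t) (\<kappa> t (X t)))" by simp
    then obtain R where "\<forall>t\<in>{0..T}. norm (G t (X t) (\<kappa> t (X t))) \<le> R"
      by (blast dest: bounded_path)
    with feedback(2) have "\<forall>t\<in>{0..T}. norm (G t (X t) (U t)) \<le> R" by simp
    with unbounded show ?thesis by blast
  next
    case blind
    have "H z = 0" for z
    proof -
      have "a = (\<lambda>_. a0)" using a0 by blast
      then have "(a has_derivative (\<lambda>h. 0)) (at z)" by simp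
      from has_derivative_unique[OF hess this] show ?thesis by (metis matrix_eq matrix_vector_mult_0)
    qed
    \<comment> \<open>The control is frozen at its initial value U 0, which is harmless by (b).\<close>
    have "continuous_on {0..T} (\<lambda>t. (t, X t, U 0))" by (intro continuous_intros X)
    from continuous_on_compose2[OF cG this]
    have "continuous_on {0..T} (\<lambda>t. G t (X t) (U 0))" by simp
    then have "continuous_on {0..T} (\<lambda>t. a0 v* G t (X t) (U 0))" by (intro continuous_intros)
    then obtain R where R: "\<forall>t\<in>{0..T}. norm (a0 v* G t (X t) (U 0)) \<le> R"
      by (blast dest: bounded_path)
    show ?thesis
    proof (intro exI ballI conjI)
      fix t assume t: "t \<in> {0..T}"
      have "\<bar>a0 \<bullet> f t (X t) (U t)\<bar> \<le> norm a0 * norm (f t (X t) (U t))"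
        by (rule Cauchy_Schwarz_ineq2)
      also have "\<dots> \<le> norm a0 * Bf" using f t by (simp add: mult_left_mono)
      finally show "\<bar>a (X t) \<bullet> f t (X t) (U t) + 1/2 * trace (transpose (G t (X t) (U t)) ** H (X t) ** G t (X t) (U t))\<bar>
          \<le> max R (norm a0 * Bf)"
        using \<open>\<And>z. H z = 0\<close> a0 by (simp add: trace_def)
      show "norm (a (X t) v* G t (X t) (U t)) \<le> max R (norm a0 * Bf)"
      proof -
        have "a (X t) v* G t (X t) (U t) = a0 v* G t (X t) (U 0)" using blind a0 by metis
        then show ?thesis using R t by (simp add: le_max_iff_disj)
      qed
    qed
  qed
qed

lemma bounded_rows_imp_uniform_bound:
  fixes h :: "real \<Rightarrow> real ^ 'm::finite" and S :: "real \<Rightarrow> real ^ 'd ^ 'm"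
  assumes "\<And>j. \<exists>C. \<forall>t\<in>A. \<bar>h t $ j\<bar> \<le> C \<and> norm (S t $ j) \<le> C"
  shows "\<exists>B\<ge>0. \<forall>t\<in>A. norm (h t) \<le> B \<and> (\<forall>v. norm (S t *v v) \<le> B * norm v)"
proof -
  obtain C where C: "\<And>j t. t \<in> A \<Longrightarrow> \<bar>h t $ j\<bar> \<le> C j \<and> norm (S t $ j) \<le> C j"
    using assms by (metis (no_types) choice_iff)
  define B where "B = (\<Sum>j\<in>UNIV. \<bar>C j\<bar>)"
  have "norm (h t) \<le> B \<and> (\<forall>v. norm (S t *v v) \<le> B * norm v)" if t: "t \<in> A" for t
  proof (intro conjI allI)
    have "norm (h t) \<le> (\<Sum>j\<in>UNIV. \<bar>h t $ j\<bar>)" by (rule norm_le_l1_cart)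
    also have "\<dots> \<le> B" unfolding B_def using C t by (intro sum_mono) (meson abs_ge_self order_trans)
    finally show "norm (h t) \<le> B" .
    fix v
    have "norm (S t *v v) \<le> (\<Sum>j\<in>UNIV. \<bar>S t $ j \<bullet> v\<bar>)"
      using norm_le_l1_cart[of "S t *v v"] by (simp add: matrix_vector_mul_component)
    also have "\<dots> \<le> (\<Sum>j\<in>UNIV. \<bar>C j\<bar> * norm v)"
    proof (intro sum_mono)
      fix j
      have "\<bar>S t $ j \<bullet> v\<bar> \<le> norm (S t $ j) * norm v" by (rule Cauchy_Schwarz_ineq2)
      also have "\<dots> \<le> \<bar>C j\<bar> * norm v" using C[of t j] t by (intro mult_right_mono) force+
      finally show "\<bar>S t $ j \<bullet> v\<bar> \<le> \<bar>C j\<bar> * norm v" .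
    qed
    also have "\<dots> = B * norm v" unfolding B_def by (simp add: sum_distrib_right)
    finally show "norm (S t *v v) \<le> B * norm v" .
  qed
  moreover have "0 \<le> B" unfolding B_def by (simp add: sum_nonneg)
  ultimately show ?thesis by blast
qed

lemma yhat_error_le:
  assumes "grid_pt k tp s = t" "t \<le> s"
    and "norm (h_coeff a H f G x u t \<omega>) \<le> B" "\<forall>v. norm (Sigma_coeff a G x u t \<omega> *v v) \<le> B * norm v"
  shows "norm (yhat g a H f G x u w k tp s \<omega> - y_of g x s \<omega>)
    \<le> dist (y_of g x t \<omega>) (y_of g x s \<omega>) + (s - t) * B + B * dist (w s \<omega>) (w t \<omega>)"
proof -
  let ?dy = "y_of g x t \<omega> - y_of g x s \<omega>"
  let ?drift = "(s - t) *\<^sub>R h_coeff a H f G x u t \<omega>"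
  let ?noise = "Sigma_coeff a G x u t \<omega> *v (w s \<omega> - w t \<omega>)"
  have eq: "yhat g a H f G x u w k tp s \<omega> - y_of g x s \<omega> = ?dy + ?drift + ?noise"
    unfolding yhat_eq_coeffs[OF assms(1)] by (simp add: algebra_simps)
  have "norm (?dy + ?drift + ?noise) \<le> norm ?dy + norm ?drift + norm ?noise"
    by (rule order_trans[OF norm_triangle_ineq add_right_mono[OF norm_triangle_ineq]])
  moreover have "norm ?drift \<le> (s - t) * B"
    using assms(2,3) by (simp add: abs_of_nonneg mult_left_mono)
  moreover have "norm ?noise \<le> B * dist (w s \<omega>) (w t \<omega>)"
    using assms(4) by (simp add: dist_norm)
  ultimately show ?thesis unfolding eq dist_norm by linarith
qed

lemma yhat_uniform_limit:
  assumes "0 < T" and part: "\<And>n. is_partition T (k n) (tp n)"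
    and mesh: "(\<lambda>n. mesh (k n) (tp n)) \<longlonglongrightarrow> 0"
    and y: "continuous_on {0..T} (\<lambda>t. y_of g x t \<omega>)" and w: "continuous_on {0..T} (\<lambda>t. w t \<omega>)"
    and "0 \<le> B"
    and B: "\<forall>t\<in>{0..T}. norm (h_coeff a H f G x u t \<omega>) \<le> B
      \<and> (\<forall>v. norm (Sigma_coeff a G x u t \<omega> *v v) \<le> B * norm v)"
  shows "uniform_limit {0..T} (\<lambda>n s. yhat g a H f G x u w (k n) (tp n) s \<omega>) (\<lambda>s. y_of g x s \<omega>) sequentially"
proof (rule uniform_limitI)
  fix e :: real assume "0 < e"
  define e' where "e' = e / (3 * (B + 1))"
  have "0 < e'" and e'B: "e' * B \<le> e / 3" "e' \<le> e / 3"
    using \<open>0 < e\<close> \<open>0 \<le> B\<close> by (auto simp: e'_def field_simps)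
  obtain d1 where "0 < d1" and d1: "\<And>s t. s \<in> {0..T} \<Longrightarrow> t \<in> {0..T} \<Longrightarrow> dist t s < d1
      \<Longrightarrow> dist (y_of g x t \<omega>) (y_of g x s \<omega>) < e / 3"
    using compact_uniformly_continuous[OF y compact_Icc] \<open>0 < e\<close>
    unfolding uniformly_continuous_on_def by (metis divide_pos_pos zero_less_numeral)
  obtain d2 where "0 < d2" and d2: "\<And>s t. s \<in> {0..T} \<Longrightarrow> t \<in> {0..T} \<Longrightarrow> dist s t < d2
      \<Longrightarrow> dist (w s \<omega>) (w t \<omega>) < e'"
    using compact_uniformly_continuous[OF w compact_Icc] \<open>0 < e'\<close>
    unfolding uniformly_continuous_on_def by metis
  have "0 < min (min d1 d2) e'" using \<open>0 < d1\<close> \<open>0 < d2\<close> \<open>0 < e'\<close> by simp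
  from order_tendstoD(2)[OF mesh this] show "\<forall>\<^sub>F n in sequentially. \<forall>s\<in>{0..T}.
      dist (yhat g a H f G x u w (k n) (tp n) s \<omega>) (y_of g x s \<omega>) < e"
  proof eventually_elim
    case (elim n)
    show ?case
    proof
      fix s assume s: "s \<in> {0..T}"
      define t where "t = grid_pt (k n) (tp n) s"
      have t: "t \<in> {0..s}" "s - t < min (min d1 d2) e'"
        using grid_pt_bounds[OF part[of n] \<open>0 < T\<close> s] elim unfolding t_def by auto
      with s have t0T: "t \<in> {0..T}" by auto
      have "t \<le> s" using t by simp
      moreover have "norm (h_coeff a H f G x u t \<omega>) \<le> B"
        "\<forall>v. norm (Sigma_coeff a G x u t \<omega> *v v) \<le> B * norm v"
        using B t0T by auto
      ultimately have "norm (yhat g a H f G x u w (k n) (tp n) s \<omega> - y_of g x s \<omega>)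
          \<le> dist (y_of g x t \<omega>) (y_of g x s \<omega>) + (s - t) * B + B * dist (w s \<omega>) (w t \<omega>)"
        by (rule yhat_error_le[OF t_def[symmetric]])
      also have "\<dots> < e / 3 + e' * B + B * e'"
        using d1[OF s t0T] d2[OF s t0T] t \<open>0 \<le> B\<close>
        by (intro add_less_le_mono add_mono mult_right_mono mult_left_mono) (auto simp: dist_real_def)
      also have "\<dots> \<le> e" using e'B by (simp add: mult.commute)
      finally show "dist (yhat g a H f G x u w (k n) (tp n) s \<omega>) (y_of g x s \<omega>) < e"
        by (simp add: dist_norm)
    qed
  qed
qed

lemma yhat_uniform_limit_along_path:
  fixes x :: "real \<Rightarrow> 'a \<Rightarrow> real ^ 'n" and u :: "real \<Rightarrow> 'a \<Rightarrow> 'u::metric_space"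
    and a :: "'m::finite \<Rightarrow> real ^ 'n \<Rightarrow> real ^ 'n" and H :: "'m \<Rightarrow> real ^ 'n \<Rightarrow> real ^ 'n ^ 'n"
    and f :: "real \<Rightarrow> real ^ 'n \<Rightarrow> 'u \<Rightarrow> real ^ 'n" and G :: "real \<Rightarrow> real ^ 'n \<Rightarrow> 'u \<Rightarrow> real ^ 'd ^ 'n"
  assumes "0 < T" "\<And>n. is_partition T (k n) (tp n)" "(\<lambda>n. mesh (k n) (tp n)) \<longlonglongrightarrow> 0"
    and "continuous_on {0..T} (\<lambda>t. x t \<omega>)" "continuous_on {0..T} (\<lambda>t. y_of g x t \<omega>)"
    and "continuous_on {0..T} (\<lambda>t. w t \<omega>)"
    and f: "\<exists>Bf. \<forall>t\<in>{0..T}. norm (f t (x t \<omega>) (u t \<omega>)) \<le> Bf"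
    and "\<And>j. continuous_on UNIV (a j)" "\<And>j. continuous_on UNIV (H j)"
    and "\<And>j z. (a j has_derivative (\<lambda>h. H j z *v h)) (at z)"
    and "\<And>j. control_independent T (\<lambda>t. x t \<omega>) (\<lambda>t. u t \<omega>) f G (a j)"
    and "\<And>j. paired_lipschitz G (a j)"
  shows "uniform_limit {0..T} (\<lambda>n s. yhat g a H f G x u w (k n) (tp n) s \<omega>) (\<lambda>s. y_of g x s \<omega>) sequentially"
proof -
  from f obtain Bf where "\<forall>t\<in>{0..T}. norm (f t (x t \<omega>) (u t \<omega>)) \<le> Bf" by blast
  then have "\<exists>B\<ge>0. \<forall>t\<in>{0..T}. norm (h_coeff a H f G x u t \<omega>) \<le> B
      \<and> (\<forall>v. norm (Sigma_coeff a G x u t \<omega> *v v) \<le> B * norm v)"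
  proof (intro bounded_rows_imp_uniform_bound)
    fix j
    from row_coeffs_bounded_along_path[OF assms(4) \<open>\<forall>t\<in>{0..T}. _ \<le> Bf\<close> assms(8-12)[of j]]
    show "\<exists>C. \<forall>t\<in>{0..T}. \<bar>h_coeff a H f G x u t \<omega> $ j\<bar> \<le> C \<and> norm (Sigma_coeff a G x u t \<omega> $ j) \<le> C"
      by (simp add: h_coeff_def Sigma_coeff_def)
  qed
  then obtain B where B: "0 \<le> B" "\<forall>t\<in>{0..T}. norm (h_coeff a H f G x u t \<omega>) \<le> B
      \<and> (\<forall>v. norm (Sigma_coeff a G x u t \<omega> *v v) \<le> B * norm v)"
    by blast
  show ?thesis by (rule yhat_uniform_limit[OF assms(1-3)]) (use assms(5,6) B in auto)
qed

text \<open>Within a partition cell the error is continuous in s, so an excess at s persists slightly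
  to the right of s and is then seen at a rational time.\<close>

lemma yhat_error_exceeds_at_rational_time:
  assumes part: "is_partition T k tp" and s: "s \<in> {0..T}"
    and y: "continuous_on {0..T} (\<lambda>t. y_of g x t \<omega>)" and w: "continuous_on {0..T} (\<lambda>t. w t \<omega>)"
    and exceeds: "e < norm (yhat g a H f G x u w k tp s \<omega> - y_of g x s \<omega>)"
  shows "\<exists>q\<in>insert T (\<rat> \<inter> {0..T}). e < norm (yhat g a H f G x u w k tp q \<omega> - y_of g x q \<omega>)"
proof (cases "s = T")
  case False
  obtain i where i: "i \<le> k" "grid_pt k tp s = tp i" "tp i \<le> s" "i < k \<Longrightarrow> s < tp (Suc i)"
    using grid_pt_cell[OF part] s by auto
  have "i < k"
  proof (rule ccontr)
    assume "\<not> i < k"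
    then have "tp i = T" using i(1) part unfolding is_partition_def by (simp add: le_antisym)
    then show False using i(3) s False by simp
  qed
  have cell_end: "s < tp (Suc i)" "tp (Suc i) \<le> T"
    using i(4)[OF \<open>i < k\<close>] is_partition_mono[OF part, of "Suc i" k] \<open>i < k\<close> part
    unfolding is_partition_def by auto
  define c where "c q = norm (y_of g x (tp i) \<omega> + (q - tp i) *\<^sub>R h_coeff a H f G x u (tp i) \<omega>
      + Sigma_coeff a G x u (tp i) \<omega> *v (w q \<omega> - w (tp i) \<omega>) - y_of g x q \<omega>)" for q
  have "continuous_on {0..T} c" unfolding c_def by (intro continuous_intros y w)
  moreover have "e < c s" using exceeds unfolding c_def yhat_eq_coeffs[OF i(2)] .
  ultimately obtain \<rho> where "0 < \<rho>" and \<rho>: "\<And>q. q \<in> {0..T} \<Longrightarrow> dist q s < \<rho> \<Longrightarrow> dist (c q) (c s) < c s - e"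
    using s unfolding continuous_on_iff by (metis diff_gt_0_iff_gt)
  obtain q where q: "q \<in> \<rat>" "s < q" "q < min (s + \<rho>) (tp (Suc i))"
    using Rats_dense_in_real[of s "min (s + \<rho>) (tp (Suc i))"] \<open>0 < \<rho>\<close> cell_end by auto
  then have q0T: "q \<in> {0..T}" using s cell_end by auto
  have "grid_pt k tp q = tp i" using grid_pt_eqI[OF part \<open>i < k\<close>] i(3) q by simp
  then have "c q = norm (yhat g a H f G x u w k tp q \<omega> - y_of g x q \<omega>)"
    unfolding c_def by (simp only: yhat_eq_coeffs)
  moreover have "e < c q" using \<rho>[OF q0T] q by (auto simp: dist_real_def)
  ultimately show ?thesis using q q0T by auto
qed (use exceeds in auto)

lemma (in prob_space) prob_tendsto_zero_if_AE_eventually_not_in: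
  assumes "\<And>n. Q n \<in> events" and "AE \<omega> in M. \<forall>\<^sub>F n in sequentially. \<omega> \<notin> Q n"
  shows "(\<lambda>n. prob (Q n)) \<longlonglongrightarrow> 0"
proof -
  have "(\<lambda>n. integral\<^sup>L M (indicator (Q n) :: 'a \<Rightarrow> real)) \<longlonglongrightarrow> integral\<^sup>L M (\<lambda>_. 0 :: real)"
  proof (rule integral_dominated_convergence[where w="\<lambda>_. 1"])
    show "AE \<omega> in M. (\<lambda>n. indicator (Q n) \<omega> :: real) \<longlonglongrightarrow> 0"
      using assms(2)
    proof eventually_elim
      case (elim \<omega>)
      then have "\<forall>\<^sub>F n in sequentially. indicator (Q n) \<omega> = (0 :: real)" by eventually_elim simp
      then show ?case by (rule tendsto_eventually)
    qed
  qed (auto intro: borel_measurable_indicator assms(1))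
  then show ?thesis using assms(1) by simp
qed

text \<open>The thresholds are the Ky Fan distances of the events B n to the empty event, plus 1/(n+1).\<close>

lemma (in prob_space) vanishing_thresholds:
  fixes B :: "nat \<Rightarrow> real \<Rightarrow> 'a set"
  assumes B: "\<And>n e. B n e \<in> events" and anti: "\<And>n e e'. e \<le> e' \<Longrightarrow> B n e' \<subseteq> B n e"
    and lim: "\<And>e. 0 < e \<Longrightarrow> (\<lambda>n. prob (B n e)) \<longlonglongrightarrow> 0"
  shows "\<exists>\<epsilon>. \<epsilon> \<longlonglongrightarrow> 0 \<and> (\<lambda>n. prob (B n (\<epsilon> n))) \<longlonglongrightarrow> 0"
proof -
  define R where "R n = {r. 0 < r \<and> prob (B n r) \<le> r}" for n
  define r where "r n = Inf (R n)" for n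
  have "1 \<in> R n" for n unfolding R_def using prob_le_1 by simp
  then have R_ne: "R n \<noteq> {}" for n by blast
  have R_bdd: "bdd_below (R n)" for n unfolding R_def by (intro bdd_belowI[of _ 0]) auto
  have r_nonneg: "0 \<le> r n" for n unfolding r_def by (rule cInf_greatest[OF R_ne]) (auto simp: R_def)
  define \<epsilon> where "\<epsilon> n = r n + inverse (real (Suc n))" for n
  have prob_le: "prob (B n (\<epsilon> n)) \<le> \<epsilon> n" for n
  proof -
    have "Inf (R n) < \<epsilon> n" unfolding \<epsilon>_def r_def by simp
    with cInf_lessD[OF R_ne] obtain q where q: "q \<in> R n" "q < \<epsilon> n" by blast
    have "prob (B n (\<epsilon> n)) \<le> prob (B n q)"
      using q B by (intro finite_measure_mono anti) auto
    also have "\<dots> \<le> q" using q unfolding R_def by simp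
    finally show ?thesis using q by simp
  qed
  have "r \<longlonglongrightarrow> 0"
  proof (rule order_tendstoI)
    show "\<forall>\<^sub>F n in sequentially. d < r n" if "d < 0" for d
      using r_nonneg that by (intro always_eventually allI) (meson less_le_trans)
    show "\<forall>\<^sub>F n in sequentially. r n < d" if "0 < d" for d
    proof -
      have "0 < d / 2" using that by simp
      from order_tendstoD(2)[OF lim[OF this] this] show ?thesis
      proof eventually_elim
        case (elim n)
        then have "d / 2 \<in> R n" unfolding R_def using \<open>0 < d / 2\<close> by simp
        then have "r n \<le> d / 2" unfolding r_def by (rule cInf_lower[OF _ R_bdd])
        then show ?case using that by simp
      qed
    qed
  qed
  then have "\<epsilon> \<longlonglongrightarrow> 0"
    unfolding \<epsilon>_def using tendsto_add[OF _ LIMSEQ_inverse_real_of_nat] by simp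
  moreover have "(\<lambda>n. prob (B n (\<epsilon> n))) \<longlonglongrightarrow> 0"
    by (rule tendsto_sandwich[of "\<lambda>_. 0" _ _ \<epsilon>]) (use prob_le \<open>\<epsilon> \<longlonglongrightarrow> 0\<close> in auto)
  ultimately show ?thesis by blast
qed

lemma (in prob_space) AE_uniform_limit_imp_pathwise_uniform_conv:
  fixes zn :: "nat \<Rightarrow> real \<Rightarrow> 'a \<Rightarrow> 'b::real_normed_vector" and z :: "real \<Rightarrow> 'a \<Rightarrow> 'b"
  assumes S: "countable S" "S \<subseteq> {0..T}"
    and meas: "\<And>n s. s \<in> S \<Longrightarrow> (\<lambda>\<omega>. norm (zn n s \<omega> - z s \<omega>)) \<in> borel_measurable M"
    and sep: "AE \<omega> in M. \<forall>n e. \<forall>s\<in>{0..T}.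
      e < norm (zn n s \<omega> - z s \<omega>) \<longrightarrow> (\<exists>q\<in>S. e < norm (zn n q \<omega> - z q \<omega>))"
    and unif: "AE \<omega> in M. uniform_limit {0..T} (\<lambda>n s. zn n s \<omega>) (\<lambda>s. z s \<omega>) sequentially"
  shows "\<exists>\<epsilon>. \<epsilon> \<longlonglongrightarrow> 0 \<and> pathwise_uniform_conv M T \<epsilon> zn z"
proof -
  define B where "B n e = {\<omega>\<in>space M. \<exists>s\<in>S. e < norm (zn n s \<omega> - z s \<omega>)}" for n e
  have B_events: "B n e \<in> events" for n e
    unfolding B_def
  proof (rule sets.sets_Collect_countable_Ex'[OF _ S(1)])
    fix s assume "s \<in> S"
    from measurable_sets[OF meas[OF this], of "{e<..}"]
    show "{\<omega> \<in> space M. e < norm (zn n s \<omega> - z s \<omega>)} \<in> events"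
      by (simp add: vimage_def Int_def conj_commute)
  qed
  have conv: "(\<lambda>n. prob (B n e)) \<longlonglongrightarrow> 0" if "0 < e" for e
  proof (rule prob_tendsto_zero_if_AE_eventually_not_in[OF B_events])
    show "AE \<omega> in M. \<forall>\<^sub>F n in sequentially. \<omega> \<notin> B n e"
      using unif
    proof eventually_elim
      case (elim \<omega>)
      from uniform_limitD[OF elim \<open>0 < e\<close>] show ?case
        by eventually_elim (use S(2) in \<open>force simp: B_def dist_norm\<close>)
    qed
  qed
  have anti: "B n e' \<subseteq> B n e" if "e \<le> e'" for n and e e' :: real
    using that unfolding B_def by force
  obtain \<epsilon> where \<epsilon>: "\<epsilon> \<longlonglongrightarrow> 0" "(\<lambda>n. prob (B n (\<epsilon> n))) \<longlonglongrightarrow> 0"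
    using vanishing_thresholds[where B=B, OF B_events anti conv] by blast
  from sep obtain N where N: "{\<omega>\<in>space M. \<not> (\<forall>n e. \<forall>s\<in>{0..T}. e < norm (zn n s \<omega> - z s \<omega>)
      \<longrightarrow> (\<exists>q\<in>S. e < norm (zn n q \<omega> - z q \<omega>)))} \<subseteq> N"
      and "emeasure M N = 0" and N_events: "N \<in> events"
    by (rule AE_E)
  then have "N \<in> null_sets M" by (simp add: null_setsI)
  define E where "E n = B n (\<epsilon> n) \<union> N" for n
  have "E n \<in> events" for n unfolding E_def using B_events N_events by auto
  moreover have "{\<omega>\<in>space M. \<exists>s\<in>{0..T}. norm (zn n s \<omega> - z s \<omega>) > \<epsilon> n * 1} \<subseteq> E n" for n
    using N(1) unfolding E_def B_def by force
  moreover have "(\<lambda>n. prob (E n)) \<longlonglongrightarrow> 0"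
    unfolding E_def using \<epsilon>(2) by (simp add: measure_Un_null_set B_events \<open>N \<in> null_sets M\<close>)
  ultimately have "pathwise_uniform_conv M T \<epsilon> zn z"
    unfolding pathwise_uniform_conv_def by (intro exI[of _ "\<lambda>_. 1"] conjI exI[of _ E]) auto
  with \<epsilon>(1) show ?thesis by blast
qed

theorem proposition1:
  fixes M :: "'a measure" and F :: "real \<Rightarrow> 'a measure"
    and w :: "real \<Rightarrow> 'a \<Rightarrow> real ^ 'd"
    and x :: "real \<Rightarrow> 'a \<Rightarrow> real ^ 'n"
    and u :: "real \<Rightarrow> 'a \<Rightarrow> real ^ 'nu"
    and f :: "real \<Rightarrow> real ^ 'n \<Rightarrow> real ^ 'nu \<Rightarrow> real ^ 'n"
    and G :: "real \<Rightarrow> real ^ 'n \<Rightarrow> real ^ 'nu \<Rightarrow> real ^ 'd ^ 'n"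
    and g :: "'m::finite \<Rightarrow> real ^ 'n \<Rightarrow> real"
    and a :: "'m \<Rightarrow> real ^ 'n \<Rightarrow> real ^ 'n"
    and H :: "'m \<Rightarrow> real ^ 'n \<Rightarrow> real ^ 'n ^ 'n"
    and T c :: real
    and k :: "nat \<Rightarrow> nat" and tp :: "nat \<Rightarrow> nat \<Rightarrow> real"
  assumes "prob_space M" and "is_filtration M F"
    and "std_brownian_motion M F w"
    and "progressive F T u"
    and "0 < T"
    and sde: "sde_solution M F w T f G u x"
    (* g_j twice continuously differentiable with gradient a_j and Hessian H_j *)
    and grad: "\<And>j z. (g j has_derivative (\<lambda>h. a j z \<bullet> h)) (at z)"
    and hess: "\<And>j z. (a j has_derivative (\<lambda>h. H j z *v h)) (at z)"
    and hess_cont: "\<And>j. continuous_on UNIV (H j)"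
    (* Control-Independence Assumption for each g_j *)
    and ctrl_indep: "\<And>j.
      (\<exists>\<kappa> :: real \<Rightarrow> real ^ 'n \<Rightarrow> real ^ 'nu. \<exists>L. L-lipschitz_on UNIV (\<lambda>(t, z). \<kappa> t z) \<and>
          (\<forall>t\<in>{0..T}. \<forall>\<omega>\<in>space M. u t \<omega> = \<kappa> t (x t \<omega>)))
      \<or> (\<forall>t z v v'. a j z \<bullet> f t z v = a j z \<bullet> f t z v' \<and> a j z v* G t z v = a j z v* G t z v')"
    (* Paired-Lipschitz Assumption for g_j and G *)
    and paired_lip: "\<And>j.
      ((\<exists>G0. \<forall>t z v. G t z v = G0) \<and> (\<exists>L. L-lipschitz_on UNIV (a j)))
      \<or> ((\<exists>a0. \<forall>z. a j z = a0) \<and> (\<exists>L. L-lipschitz_on UNIV (\<lambda>(t, z, v). G t z v)))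
      \<or> (bounded (range (a j)) \<and> (\<exists>L. L-lipschitz_on UNIV (a j)) \<and>
         bounded (range (\<lambda>(t, z, v). G t z v)) \<and> (\<exists>L. L-lipschitz_on UNIV (\<lambda>(t, z, v). G t z v)))"
    (* assumption (1) *)
    and f_bdd: "AE \<omega> in M. \<exists>B. \<forall>t\<in>{0..T}. norm (f t (x t \<omega>) (u t \<omega>)) \<le> B"
    and f_L2: "(\<integral>\<^sup>+\<omega>. (\<integral>\<^sup>+t\<in>{0..T}. ennreal ((norm (f t (x t \<omega>) (u t \<omega>)))\<^sup>2) \<partial>lborel) \<partial>M) < \<infinity>"
    (* assumption (2) *)
    and G_bdd: "\<exists>B. \<forall>t\<in>{0..T}. (\<integral>\<^sup>+\<omega>. ennreal ((norm (G t (x t \<omega>) (u t \<omega>)))\<^sup>2) \<partial>M) \<le> ennreal B"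
    and G_L2: "(\<integral>\<^sup>+\<omega>. (\<integral>\<^sup>+t\<in>{0..T}. ennreal ((norm (G t (x t \<omega>) (u t \<omega>)))\<^sup>2) \<partial>lborel) \<partial>M) < \<infinity>"
    and part: "\<And>n. is_partition T (k n) (tp n)"
    and mesh0: "(\<lambda>n. mesh (k n) (tp n)) \<longlonglongrightarrow> 0"
    and "0 < c" and kmesh: "\<And>n. real (k n) * mesh (k n) (tp n) \<le> c * T"
  shows "\<exists>\<epsilon> :: nat \<Rightarrow> real. \<epsilon> \<longlonglongrightarrow> 0 \<and>
           pathwise_uniform_conv M T \<epsilon>
             (\<lambda>n. yhat g a H f G x u w (k n) (tp n))
             (\<lambda>s \<omega>. \<chi> j. g j (x s \<omega>))"
proof -
  interpret prob_space M by fact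
  have cg: "continuous_on UNIV (g j)" for j
    by (intro continuous_at_imp_continuous_on ballI has_derivative_continuous[OF grad])
  have ca: "continuous_on UNIV (a j)" for j
    by (intro continuous_at_imp_continuous_on ballI has_derivative_continuous[OF hess])
  have ci: "control_independent T (\<lambda>t. x t \<omega>) (\<lambda>t. u t \<omega>) f G (a j)" if "\<omega> \<in> space M" for j \<omega>
    using ctrl_indep[of j] that unfolding control_independent_def by blast
  have pl: "paired_lipschitz G (a j)" for j
    using paired_lip[of j] unfolding paired_lipschitz_def .
  have y_cont: "continuous_on {0..T} (\<lambda>t. y_of g x t \<omega>)" if "continuous_on {0..T} (\<lambda>t. x t \<omega>)" for \<omega>
    unfolding y_of_def by (intro continuous_on_vec_lambda continuous_on_compose2[OF cg that]) simp
  have "AE \<omega> in M. continuous_on {0..T} (\<lambda>t. x t \<omega>)" "AE \<omega> in M. continuous_on {0..} (\<lambda>t. w t \<omega>)"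
    using sde \<open>std_brownian_motion M F w\<close> unfolding sde_solution_def std_brownian_motion_def by blast+
  then have paths: "AE \<omega> in M. continuous_on {0..T} (\<lambda>t. x t \<omega>) \<and>
      continuous_on {0..T} (\<lambda>t. y_of g x t \<omega>) \<and> continuous_on {0..T} (\<lambda>t. w t \<omega>)"
    by eventually_elim (auto intro: y_cont elim: continuous_on_subset)
  define S where "S = insert T (\<rat> \<inter> {0..T})"
  have "\<exists>\<epsilon>. \<epsilon> \<longlonglongrightarrow> 0 \<and> pathwise_uniform_conv M T \<epsilon> (\<lambda>n. yhat g a H f G x u w (k n) (tp n)) (y_of g x)"
  proof (rule AE_uniform_limit_imp_pathwise_uniform_conv)
    show "countable S" "S \<subseteq> {0..T}" unfolding S_def using \<open>0 < T\<close> by (auto simp: countable_rat)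
    show "(\<lambda>\<omega>. norm (yhat g a H f G x u w (k n) (tp n) s \<omega> - y_of g x s \<omega>)) \<in> borel_measurable M"
      if "s \<in> S" for n s
      using that \<open>0 < T\<close> unfolding S_def
      by (intro yhat_error_measurable[OF assms(2,3) sde part \<open>0 < T\<close>] cg ca hess_cont) auto
    show "AE \<omega> in M. \<forall>n e. \<forall>s\<in>{0..T}. e < norm (yhat g a H f G x u w (k n) (tp n) s \<omega> - y_of g x s \<omega>)
        \<longrightarrow> (\<exists>q\<in>S. e < norm (yhat g a H f G x u w (k n) (tp n) q \<omega> - y_of g x q \<omega>))"
      using paths unfolding S_def
      by eventually_elim (intro allI ballI impI yhat_error_exceeds_at_rational_time[OF part], auto)
    show "AE \<omega> in M. uniform_limit {0..T} (\<lambda>n s. yhat g a H f G x u w (k n) (tp n) s \<omega>)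
        (\<lambda>s. y_of g x s \<omega>) sequentially"
      using AE_space paths f_bdd
      by eventually_elim (intro yhat_uniform_limit_along_path[OF \<open>0 < T\<close> part mesh0] ca hess_cont hess ci pl, auto)
  qed
  moreover have "(\<lambda>s \<omega>. \<chi> j. g j (x s \<omega>)) = y_of g x" by (simp add: fun_eq_iff y_of_def)
  ultimately show ?thesis by simp
qed

end
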